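(* Let $A\in\mathbb{R}^{m\times n}$ with $\lambda:=\lambda_{\max}(A^TA)>0$, $b\in\mathbb{R}^m$, and $D\subseteq\mathbb{R}^n$ a nonempty compact set. Given $x^0\in\mathbb{R}^n$ and $\gamma\in(0,\frac1{12\lambda})$, consider the iteration \[ y^{t+1}=[(5\gamma\lambda+1)I+\gamma A^TA]^{-1}(x^t+\gamma A^Tb),\quad z^{t+1}\in P_D\!\left(\frac{2y^{t+1}-x^t}{1-5\lambda\gamma}\right),\quad x^{t+1}=x^t+2(z^{t+1}-y^{t+1}). \] Then $\{(y^t,z^t,x^t)\}$ is bounded and every cluster point $(\bar y,\bar z,\bar x)$ satisfies $\bar y=\bar z$ and $0\in A^T(A\bar z-b)+\partial\delta_D(\bar z)$, i.e., $\bar z$ is a stationary point of $\min_{u\in D}\frac12\|Au-b\|^2$.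
   Context: $P_D(x)$ denotes the (possibly multivalued) set of points of $D$ nearest to $x$ (any element may be chosen); $\delta_D$ is the indicator function of $D$; $\partial\delta_D$ is the limiting subdifferential: $v\in\partial h(x)$ iff there exist $x^t\to x$ with $h(x^t)\to h(x)$ and $v^t\to v$ such that $\liminf_{z\to x^t, z\ne x^t}\frac{h(z)-h(x^t)-\langle v^t,z-x^t\rangle}{\|z-x^t\|}\ge0$ for each $t$. *)

theory Defs
  imports "HOL-Analysis.Analysis"
begin

definition lambda_max :: "real^'n^'n \<Rightarrow> real" where
  "lambda_max M = Max {l. \<exists>v. v \<noteq> 0 \<and> M *v v = l *\<^sub>R v}"

definition proj_set :: "('a::metric_space) set \<Rightarrow> 'a \<Rightarrow> 'a set" where
  "proj_set D x = {z \<in> D. \<forall>w\<in>D. dist x z \<le> dist x w}"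

definition indicator_fun :: "'a set \<Rightarrow> 'a \<Rightarrow> ereal" where
  "indicator_fun D x = (if x \<in> D then 0 else \<infinity>)"

definition regular_subdiff :: "('a::real_inner \<Rightarrow> ereal) \<Rightarrow> 'a \<Rightarrow> 'a set" where
  "regular_subdiff h x = {v. \<bar>h x\<bar> \<noteq> \<infinity> \<and>
     Liminf (at x) (\<lambda>z. (h z - h x - ereal (inner v (z - x))) / ereal (norm (z - x))) \<ge> 0}"

definition limiting_subdiff :: "('a::real_inner \<Rightarrow> ereal) \<Rightarrow> 'a \<Rightarrow> 'a set" where
  "limiting_subdiff h x = {v. \<exists>xs vs. xs \<longlonglongrightarrow> x \<and> (\<lambda>t. h (xs t)) \<longlonglongrightarrow> h x \<and>
     vs \<longlonglongrightarrow> v \<and> (\<forall>t. vs t \<in> regular_subdiff h (xs t))}"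

end

theory Submission
  imports Defs
begin

text \<open>Write \<open>S = A\<^sup>T A\<close>, \<open>p = A\<^sup>T b\<close> and \<open>c = 5\<lambda>\<close>. The \<open>y\<close>-update says
  \<open>x\<^sup>t = y\<^sup>t\<^sup>+\<^sup>1 + \<gamma> \<nabla>f(y\<^sup>t\<^sup>+\<^sup>1)\<close> for the strongly convex quadratic
  \<open>f u = \<langle>S u, u\<rangle>/2 + c/2 \<parallel>u\<parallel>\<^sup>2 - \<langle>p, u\<rangle>\<close>, and the \<open>z\<close>-update is a proximal step for
  \<open>\<gamma> (\<delta>\<^sub>D - c/2 \<parallel>\<cdot>\<parallel>\<^sup>2)\<close>, so the scheme is Douglas--Rachford splitting of the
  least-squares problem.

  Boundedness: the reflected resolvent \<open>2 (I + \<gamma> \<nabla>f)\<^sup>-\<^sup>1 - I\<close> of the strongly monotone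
  Lipschitz map \<open>\<nabla>f\<close> is a strict contraction and \<open>z\<^sup>t\<close> stays in the compact set \<open>D\<close>, so
  \<open>\<parallel>x\<^sup>t\<parallel>\<close> obeys an affine recurrence with factor below one.

  Stationarity: for \<open>\<gamma> (\<lambda> + 2c) \<le> 1\<close> the Douglas--Rachford merit function drops by at least
  \<open>c (1 - c\<gamma>)/2 \<parallel>y\<^sup>t\<^sup>+\<^sup>1 - y\<^sup>t\<parallel>\<^sup>2\<close> per step and is bounded below on \<open>D\<close>, so consecutive
  \<open>y\<^sup>t\<close> and hence \<open>z\<^sup>t - y\<^sup>t\<close> tend to zero. The projection step provides a proximal normal
  to \<open>D\<close> at \<open>z\<^sup>t\<close>, and along a convergent subsequence these normals converge to
  \<open>-A\<^sup>T(A z - b)\<close> at the limit \<open>z\<close>.\<close>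

section \<open>Spectral bounds\<close>

lemma quadratic_nonneg_imp_linear_coeff_zero:
  fixes a r :: real
  assumes nonneg: "\<And>t. 0 \<le> 2 * t * a + t\<^sup>2 * r"
  shows "a = 0"
proof -
  have "0 \<le> r" using nonneg[of 1] nonneg[of "-1"] by simp
  define t where "t = - a / (r + 1)"
  have a: "a = - t * (r + 1)" using \<open>0 \<le> r\<close> unfolding t_def by (simp add: field_simps)
  have "0 \<le> 2 * t * a + t\<^sup>2 * r" by (rule nonneg)
  also have "\<dots> = - (t\<^sup>2 * (r + 2))" unfolding a by (simp add: algebra_simps power2_eq_square)
  finally have "t\<^sup>2 * (r + 2) \<le> 0" by simp
  with \<open>0 \<le> r\<close> have "t = 0" by (simp add: mult_le_0_iff)
  with a show ?thesis by simp
qed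

lemma psd_form_zero_imp_zero:
  fixes T :: "'a::real_inner \<Rightarrow> 'a"
  assumes "linear T" and sym: "\<And>u v. inner (T u) v = inner u (T v)"
    and psd: "\<And>w. 0 \<le> inner (T w) w" and zero: "inner (T v) v = 0"
  shows "T v = 0"
proof -
  interpret T: linear T by fact
  have "inner (T v) w = 0" for w
  proof (rule quadratic_nonneg_imp_linear_coeff_zero)
    fix t :: real
    have "0 \<le> inner (T (v + t *\<^sub>R w)) (v + t *\<^sub>R w)" by (rule psd)
    also have "\<dots> = 2 * t * inner (T v) w + t\<^sup>2 * inner (T w) w"
      using zero sym[of w v]
      by (simp add: T.add T.scale inner_add_left inner_add_right inner_commute
          algebra_simps power2_eq_square)
    finally show "0 \<le> 2 * t * inner (T v) w + t\<^sup>2 * inner (T w) w" .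
  qed
  then show ?thesis using inner_eq_zero_iff by blast
qed

lemma inner_transpose_mult: "inner (transpose A *v w) v = inner w ((A::real^'n^'m) *v v)"
  by (simp add: dot_lmul_matrix)

lemma finite_eigenvalues_symmetric:
  fixes M :: "real^'n^'n"
  assumes sym: "transpose M = M"
  shows "finite {l. \<exists>v. v \<noteq> 0 \<and> M *v v = l *\<^sub>R v}"
proof -
  define E where "E = {l. \<exists>v. v \<noteq> 0 \<and> M *v v = l *\<^sub>R v}"
  define ev where "ev l = (SOME v. v \<noteq> 0 \<and> M *v v = l *\<^sub>R v)" for l
  have ev: "ev l \<noteq> 0" "M *v ev l = l *\<^sub>R ev l" if "l \<in> E" for l
    using that unfolding E_def ev_def by (metis (mono_tags, lifting) mem_Collect_eq someI_ex)+
  have orth: "inner u v = 0" if "M *v u = l *\<^sub>R u" "M *v v = l' *\<^sub>R v" "l \<noteq> l'" for u v l l'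
  proof -
    have "l * inner u v = inner (M *v u) v" using that by simp
    also have "\<dots> = inner u (M *v v)" using inner_transpose_mult[of M u v] sym by simp
    also have "\<dots> = l' * inner u v" using that by simp
    finally show ?thesis using that(3) by simp
  qed
  have "inj_on ev E"
  proof (rule inj_onI)
    fix l l' assume "l \<in> E" "l' \<in> E" "ev l = ev l'"
    then have "l *\<^sub>R ev l = l' *\<^sub>R ev l" "ev l \<noteq> 0" using ev by metis+
    then show "l = l'" by simp
  qed
  moreover have "independent (ev ` E)"
  proof (rule pairwise_orthogonal_independent)
    show "pairwise orthogonal (ev ` E)"
      by (rule pairwise_imageI) (use ev orth in \<open>auto simp: orthogonal_def\<close>)
    show "0 \<notin> ev ` E" using ev by auto
  qed
  ultimately show ?thesis unfolding E_def[symmetric] using finiteI_independent finite_imageD by blast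
qed

lemma norm_mult_sq_le_lambda_max:
  fixes A :: "real^'n^'m"
  shows "(norm (A *v v))\<^sup>2 \<le> lambda_max (transpose A ** A) * (norm v)\<^sup>2"
proof -
  define S where "S = transpose A ** A"
  have S_inner: "inner (S *v u) w = inner (A *v u) (A *v w)" for u w
    unfolding S_def by (simp only: matrix_vector_mul_assoc[symmetric] inner_transpose_mult)
  have "continuous_on (sphere 0 1) (\<lambda>v. (norm (A *v v))\<^sup>2)"
    by (intro continuous_intros)
  moreover have "sphere (0::real^'n) 1 \<noteq> {}" by simp
  ultimately obtain v0 where v0: "v0 \<in> sphere 0 1"
    and v0_max: "\<And>v. v \<in> sphere 0 1 \<Longrightarrow> (norm (A *v v))\<^sup>2 \<le> (norm (A *v v0))\<^sup>2"
    using continuous_attains_sup[OF compact_sphere] by blast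
  define \<mu> where "\<mu> = (norm (A *v v0))\<^sup>2"
  have bound: "(norm (A *v v))\<^sup>2 \<le> \<mu> * (norm v)\<^sup>2" for v
  proof (cases "v = 0")
    case False
    then have "(norm (A *v ((1 / norm v) *\<^sub>R v)))\<^sup>2 \<le> \<mu>"
      unfolding \<mu>_def by (intro v0_max) simp
    then have "(norm (A *v v))\<^sup>2 / (norm v)\<^sup>2 \<le> \<mu>"
      by (simp add: matrix_vector_mult_scaleR power_divide)
    with False show ?thesis by (simp add: divide_le_eq mult.commute)
  qed simp
  \<comment> \<open>The maximiser of the Rayleigh quotient is an eigenvector, by the first-order condition.\<close>
  have "\<mu> *\<^sub>R v0 - S *v v0 = 0"
  proof (rule psd_form_zero_imp_zero[where T = "\<lambda>u. \<mu> *\<^sub>R u - S *v u"])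
    show "linear (\<lambda>u. \<mu> *\<^sub>R u - S *v u)"
      by (intro linear_compose_sub linear_scaleR matrix_vector_mul_linear)
    show "inner (\<mu> *\<^sub>R u - S *v u) w = inner u (\<mu> *\<^sub>R w - S *v w)" for u w
      using S_inner[of u w] S_inner[of w u]
      by (simp add: inner_diff_left inner_diff_right inner_commute)
    show "0 \<le> inner (\<mu> *\<^sub>R w - S *v w) w" for w
      using bound[of w] by (simp add: inner_diff_left S_inner power2_norm_eq_inner)
    show "inner (\<mu> *\<^sub>R v0 - S *v v0) v0 = 0"
      using v0 by (simp add: inner_diff_left S_inner \<mu>_def flip: power2_norm_eq_inner)
  qed
  then have "v0 \<noteq> 0 \<and> S *v v0 = \<mu> *\<^sub>R v0" using v0 by auto
  then have "\<mu> \<le> lambda_max S"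
    unfolding lambda_max_def
    by (intro Max_ge finite_eigenvalues_symmetric) (auto simp: S_def matrix_transpose_mul)
  then show ?thesis
    using bound[of v] mult_right_mono[of \<mu> "lambda_max S" "(norm v)\<^sup>2"] by (simp add: S_def)
qed

lemma norm_gram_sq_le:
  fixes A :: "real^'n^'m"
  assumes "0 \<le> lambda_max (transpose A ** A)"
  shows "(norm (transpose A *v (A *v v)))\<^sup>2 \<le> lambda_max (transpose A ** A) * (norm (A *v v))\<^sup>2"
proof -
  define lam where "lam = lambda_max (transpose A ** A)"
  define s where "s = transpose A *v (A *v v)"
  have "(norm s)\<^sup>2 = inner (A *v v) (A *v s)"
    unfolding s_def by (simp only: power2_norm_eq_inner inner_transpose_mult)
  also have "\<dots> \<le> norm (A *v v) * norm (A *v s)" by (rule norm_cauchy_schwarz)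
  finally have "((norm s)\<^sup>2)\<^sup>2 \<le> (norm (A *v v))\<^sup>2 * (norm (A *v s))\<^sup>2"
    by (metis power_mono power_mult_distrib zero_le_power2)
  also have "\<dots> \<le> (norm (A *v v))\<^sup>2 * (lam * (norm s)\<^sup>2)"
    unfolding lam_def by (intro mult_left_mono norm_mult_sq_le_lambda_max) simp
  finally have "(norm s)\<^sup>2 * (norm s)\<^sup>2 \<le> (lam * (norm (A *v v))\<^sup>2) * (norm s)\<^sup>2"
    by (simp add: power2_eq_square algebra_simps)
  then have "(norm s)\<^sup>2 \<le> lam * (norm (A *v v))\<^sup>2"
  proof (cases "s = 0")
    case False
    then have "0 < (norm s)\<^sup>2" by simp
    with mult_right_le_imp_le show ?thesis
      using \<open>(norm s)\<^sup>2 * (norm s)\<^sup>2 \<le> lam * (norm (A *v v))\<^sup>2 * (norm s)\<^sup>2\<close> by blast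
  qed (use assms in \<open>simp add: lam_def\<close>)
  then show ?thesis unfolding s_def lam_def .
qed

section \<open>Projections and regular normals\<close>

lemma proj_set_minimizes:
  fixes D :: "'a::real_inner set"
  assumes "z \<in> proj_set D u" and "v \<in> D"
  shows "(norm z)\<^sup>2 - 2 * inner u z \<le> (norm v)\<^sup>2 - 2 * inner u v"
proof -
  have "dist u z \<le> dist u v" using assms unfolding proj_set_def by auto
  then have "(norm (u - z))\<^sup>2 \<le> (norm (u - v))\<^sup>2" by (simp add: dist_norm power_mono)
  then show ?thesis
    by (simp add: power2_norm_eq_inner inner_diff_left inner_diff_right inner_commute)
qed

lemma proximal_normal_regular_subdiff:
  fixes D :: "'a::real_inner set"
  assumes "z \<in> D" and "0 \<le> K"
    and normal: "\<And>v. v \<in> D \<Longrightarrow> inner w (v - z) \<le> K * (norm (v - z))\<^sup>2"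
  shows "w \<in> regular_subdiff (indicator_fun D) z"
proof -
  let ?q = "\<lambda>u. (indicator_fun D u - indicator_fun D z - ereal (inner w (u - z))) / ereal (norm (u - z))"
  have "ereal (- K * norm (u - z)) \<le> ?q u" if "u \<noteq> z" for u
  proof (cases "u \<in> D")
    case True
    have "inner w (u - z) / norm (u - z) \<le> K * norm (u - z)"
      using normal[OF True] that by (simp add: divide_le_eq power2_eq_square mult.assoc)
    with True \<open>z \<in> D\<close> that show ?thesis by (simp add: indicator_fun_def)
  qed (use \<open>z \<in> D\<close> that in \<open>simp add: indicator_fun_def\<close>)
  then have "Liminf (at z) (\<lambda>u. ereal (- K * norm (u - z))) \<le> Liminf (at z) ?q"
    by (intro Liminf_mono) (simp add: eventually_at_filter)
  moreover have "Liminf (at z) (\<lambda>u. ereal (- K * norm (u - z))) \<ge> 0"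
  proof (cases "at z = bot")
    case False
    have "((\<lambda>u. - K * norm (u - z)) \<longlongrightarrow> - K * norm (z - z)) (at z)"
      by (intro tendsto_intros)
    then have "((\<lambda>u. ereal (- K * norm (u - z))) \<longlongrightarrow> 0) (at z)"
      by (simp add: zero_ereal_def)
    with False show ?thesis by (simp add: lim_imp_Liminf)
  qed simp
  ultimately show ?thesis
    using \<open>z \<in> D\<close> unfolding regular_subdiff_def by (simp add: indicator_fun_def)
qed

lemma proj_set_normal_regular_subdiff:
  fixes D :: "'a::real_inner set"
  assumes proj: "z \<in> proj_set D u" and "0 \<le> \<kappa>"
  shows "\<kappa> *\<^sub>R (u - z) \<in> regular_subdiff (indicator_fun D) z"
proof (rule proximal_normal_regular_subdiff)
  show "z \<in> D" using proj unfolding proj_set_def by simp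
  show "0 \<le> \<kappa> / 2" using \<open>0 \<le> \<kappa>\<close> by simp
  fix v assume "v \<in> D"
  from proj_set_minimizes[OF proj this]
  have "2 * inner (u - z) (v - z) \<le> (norm (v - z))\<^sup>2"
    by (simp add: power2_norm_eq_inner inner_diff_left inner_diff_right inner_commute)
  with \<open>0 \<le> \<kappa>\<close> show "inner (\<kappa> *\<^sub>R (u - z)) (v - z) \<le> \<kappa> / 2 * (norm (v - z))\<^sup>2"
    using mult_left_mono by fastforce
qed

lemma affine_recurrence_bounded:
  fixes X :: "nat \<Rightarrow> real"
  assumes "0 \<le> q" and "q < 1" and step: "\<And>t. X (Suc t) \<le> q * X t + C"
  shows "X t \<le> max (X 0) (C / (1 - q))"
proof (induction t)
  case (Suc t)
  define B where "B = max (X 0) (C / (1 - q))"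
  have "C / (1 - q) \<le> B" by (simp add: B_def)
  then have "C \<le> (1 - q) * B" using \<open>q < 1\<close> by (simp add: divide_le_eq mult.commute)
  moreover have "q * X t \<le> q * B" using Suc \<open>0 \<le> q\<close> by (simp add: B_def mult_left_mono)
  ultimately show ?case using step[of t] by (simp add: B_def algebra_simps)
qed simp

lemma descent_tendsto_zero:
  fixes W e :: "nat \<Rightarrow> real"
  assumes descent: "\<And>k. W (Suc k) \<le> W k - \<delta> * e k"
    and e_nonneg: "\<And>k. 0 \<le> e k" and "\<And>k. B \<le> W k" and "0 < \<delta>"
  shows "e \<longlonglongrightarrow> 0"
proof (rule tendsto_sandwich[of "\<lambda>_. 0" _ _ "\<lambda>k. (W k - W (Suc k)) / \<delta>"])
  have "W (Suc k) \<le> W k" for k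
    using descent[of k] e_nonneg[of k] \<open>0 < \<delta>\<close> by (smt (verit) mult_nonneg_nonneg)
  then have "decseq W" by (rule decseq_SucI)
  then obtain L where L: "W \<longlonglongrightarrow> L" using assms(3) decseq_convergent by blast
  have "(\<lambda>k. (W k - W (Suc k)) / \<delta>) \<longlonglongrightarrow> (L - L) / \<delta>"
    using \<open>0 < \<delta>\<close> by (intro tendsto_divide tendsto_diff L LIMSEQ_Suc[OF L]) auto
  then show "(\<lambda>k. (W k - W (Suc k)) / \<delta>) \<longlonglongrightarrow> 0" by simp
  have "e k \<le> (W k - W (Suc k)) / \<delta>" for k
    using descent[of k] \<open>0 < \<delta>\<close> by (simp add: le_divide_eq mult.commute)
  then show "\<forall>\<^sub>F k in sequentially. e k \<le> (W k - W (Suc k)) / \<delta>" by simp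
qed (simp_all add: e_nonneg)

lemma norm_diff_double_le:
  fixes u w :: "'a::real_inner"
  assumes coercive: "(1 + a) * (norm u)\<^sup>2 \<le> inner w u" and bounded: "norm w \<le> K * norm u"
    and "0 \<le> a" and "0 < K"
  shows "(norm (w - 2 *\<^sub>R u))\<^sup>2 \<le> (1 - 4 * a / K\<^sup>2) * (norm w)\<^sup>2"
proof -
  have "(norm w)\<^sup>2 \<le> K\<^sup>2 * (norm u)\<^sup>2"
    using power_mono[OF bounded, of 2] by (simp add: power_mult_distrib)
  then have "4 * a * ((norm w)\<^sup>2 / K\<^sup>2) \<le> 4 * a * (norm u)\<^sup>2"
    using \<open>0 \<le> a\<close> \<open>0 < K\<close> by (intro mult_left_mono) (simp_all add: divide_le_eq mult.commute)
  moreover have "(norm (w - 2 *\<^sub>R u))\<^sup>2 = (norm w)\<^sup>2 - 4 * inner w u + 4 * (norm u)\<^sup>2"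
    by (simp add: power2_norm_eq_inner inner_diff_left inner_diff_right inner_commute)
  ultimately show ?thesis using coercive by (simp add: algebra_simps)
qed

section \<open>Douglas--Rachford splitting with a quadratic smooth part\<close>

locale dr_quadratic =
  fixes S :: "'a::real_inner \<Rightarrow> 'a" and p :: 'a and lam c \<gamma> :: real
  assumes S_bounded_linear: "bounded_linear S"
    and S_symmetric: "\<And>u v. inner (S u) v = inner u (S v)"
    and S_bound: "\<And>v. (norm (S v))\<^sup>2 \<le> lam * inner (S v) v"
    and lam_nonneg: "0 \<le> lam" and c_pos: "0 < c" and \<gamma>_pos: "0 < \<gamma>"
    and step_size: "\<gamma> * (lam + 2 * c) \<le> 1"
begin

sublocale S: bounded_linear S by (rule S_bounded_linear)

lemma S_psd: "0 \<le> inner (S v) v"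
proof (cases "lam = 0")
  case True
  then show ?thesis using S_bound[of v] by simp
next
  case False
  then have "0 < lam" using lam_nonneg by simp
  moreover have "0 \<le> lam * inner (S v) v" using S_bound[of v] by (meson order_trans zero_le_power2)
  ultimately show ?thesis by (simp add: zero_le_mult_iff)
qed

lemma inner_S_le: "inner (S v) v \<le> lam * (norm v)\<^sup>2"
proof (cases "inner (S v) v = 0")
  case False
  then have pos: "0 < inner (S v) v" using S_psd[of v] by simp
  have "(inner (S v) v)\<^sup>2 \<le> (norm (S v) * norm v)\<^sup>2"
    using Cauchy_Schwarz_ineq[of "S v" v] by (simp add: power_mult_distrib power2_norm_eq_inner)
  also have "\<dots> \<le> lam * inner (S v) v * (norm v)\<^sup>2"
    unfolding power_mult_distrib using S_bound[of v] by (simp add: mult_right_mono)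
  finally have "inner (S v) v * inner (S v) v \<le> inner (S v) v * (lam * (norm v)\<^sup>2)"
    by (simp add: power2_eq_square algebra_simps)
  with pos show ?thesis by simp
qed (simp add: lam_nonneg)

lemma norm_S_le: "norm (S v) \<le> lam * norm v"
proof (rule power2_le_imp_le)
  have "(norm (S v))\<^sup>2 \<le> lam * (lam * (norm v)\<^sup>2)"
    using S_bound[of v] inner_S_le[of v] lam_nonneg by (meson mult_left_mono order_trans)
  then show "(norm (S v))\<^sup>2 \<le> (lam * norm v)\<^sup>2" by (simp add: power2_eq_square mult_ac)
qed (simp add: lam_nonneg)

lemma step_size_lt_1: "c * \<gamma> < 1"
proof -
  have "\<gamma> * lam + 2 * (c * \<gamma>) \<le> 1" using step_size by (simp add: algebra_simps)
  moreover have "0 \<le> \<gamma> * lam" "0 < c * \<gamma>" using \<gamma>_pos lam_nonneg c_pos by simp_all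
  ultimately show ?thesis by linarith
qed

definition grad :: "'a \<Rightarrow> 'a" where
  "grad u = S u + c *\<^sub>R u - p"

definition smooth :: "'a \<Rightarrow> real" where
  "smooth u = inner (S u) u / 2 + c / 2 * (norm u)\<^sup>2 - inner p u"

text \<open>The Douglas--Rachford merit function \<open>F y + \<langle>\<nabla>F y, z - y\<rangle> + \<parallel>z - y\<parallel>\<^sup>2/(2\<gamma>) + G z\<close>
  for \<open>F = smooth\<close> and \<open>G = \<delta>\<^sub>D - c/2 \<parallel>\<cdot>\<parallel>\<^sup>2\<close>; the indicator is dropped since it is only
  evaluated at \<open>z \<in> D\<close>.\<close>
definition merit :: "'a \<Rightarrow> 'a \<Rightarrow> real" where
  "merit y z = smooth y + inner (grad y) (z - y) + (norm (z - y))\<^sup>2 / (2 * \<gamma>) - c / 2 * (norm z)\<^sup>2"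

lemma grad_diff: "grad u - grad v = S (u - v) + c *\<^sub>R (u - v)"
  by (simp add: grad_def S.diff algebra_simps)

lemma norm_grad_diff_le: "norm (grad u - grad v) \<le> (lam + c) * norm (u - v)"
proof -
  have "norm (grad u - grad v) \<le> norm (S (u - v)) + c * norm (u - v)"
    unfolding grad_diff using norm_triangle_ineq[of "S (u - v)" "c *\<^sub>R (u - v)"] c_pos by simp
  then show ?thesis using norm_S_le[of "u - v"] by (simp add: algebra_simps)
qed

lemma smooth_expansion:
  "smooth (u + e) = smooth u + inner (grad u) e + (inner (S e) e + c * (norm e)\<^sup>2) / 2"
  using S_symmetric[of e u]
  by (simp add: smooth_def grad_def S.add power2_norm_eq_inner inner_add_left inner_add_right
      inner_diff_left inner_diff_right inner_commute field_simps)

lemma merit_quadratic_in_z: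
  "merit y z = ((1 - c * \<gamma>) / 2 * (norm z)\<^sup>2 - inner (y - \<gamma> *\<^sub>R grad y) z) / \<gamma>
    + (smooth y - inner (grad y) y + (norm y)\<^sup>2 / (2 * \<gamma>))"
  using \<gamma>_pos
  by (simp add: merit_def power2_norm_eq_inner inner_diff_left inner_diff_right inner_commute
      field_simps)

lemma merit_proj_step:
  assumes "z' \<in> proj_set D ((1 / (1 - c * \<gamma>)) *\<^sub>R (y - \<gamma> *\<^sub>R grad y))" and "z \<in> D"
  shows "merit y z' \<le> merit y z"
proof -
  define \<beta> where "\<beta> = 1 - c * \<gamma>"
  define w where "w = y - \<gamma> *\<^sub>R grad y"
  have "0 < \<beta>" using step_size_lt_1 by (simp add: \<beta>_def)
  from proj_set_minimizes[OF assms]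
  have "(norm z')\<^sup>2 - 2 * inner ((1 / \<beta>) *\<^sub>R w) z' \<le> (norm z)\<^sup>2 - 2 * inner ((1 / \<beta>) *\<^sub>R w) z"
    by (simp add: \<beta>_def w_def)
  then have "\<beta> / 2 * ((norm z')\<^sup>2 - 2 * inner ((1 / \<beta>) *\<^sub>R w) z')
      \<le> \<beta> / 2 * ((norm z)\<^sup>2 - 2 * inner ((1 / \<beta>) *\<^sub>R w) z)"
    using \<open>0 < \<beta>\<close> by (simp add: mult_left_mono)
  then have "\<beta> / 2 * (norm z')\<^sup>2 - inner w z' \<le> \<beta> / 2 * (norm z)\<^sup>2 - inner w z"
    using \<open>0 < \<beta>\<close> by (simp add: algebra_simps)
  then show ?thesis
    using \<gamma>_pos unfolding merit_quadratic_in_z by (simp add: \<beta>_def w_def divide_right_mono)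
qed

lemma merit_gradient_step_eq:
  assumes step: "2 *\<^sub>R (z - y) = (y' - y) + \<gamma> *\<^sub>R (grad y' - grad y)"
  shows "merit y' z = merit y z + \<gamma> / 2 * (norm (grad y' - grad y))\<^sup>2
    - inner (grad y' - grad y) (y' - y) / 2"
proof -
  define d where "d = y' - y"
  define h where "h = grad y' - grad y"
  define a where "a = z - y"
  have a: "2 *\<^sub>R a = d + \<gamma> *\<^sub>R h" using step by (simp add: a_def d_def h_def)
  have ha: "inner h a = (inner h d + \<gamma> * (norm h)\<^sup>2) / 2"
  proof -
    have "2 * inner h a = inner h (2 *\<^sub>R a)" by simp
    also have "\<dots> = inner h d + \<gamma> * (norm h)\<^sup>2"
      unfolding a by (simp add: inner_add_right power2_norm_eq_inner)
    finally show ?thesis by simp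
  qed
  have ad: "inner a d = ((norm d)\<^sup>2 + \<gamma> * inner h d) / 2"
  proof -
    have "2 * inner a d = inner (2 *\<^sub>R a) d" by simp
    also have "\<dots> = (norm d)\<^sup>2 + \<gamma> * inner h d"
      unfolding a by (simp add: inner_add_left power2_norm_eq_inner)
    finally show ?thesis by simp
  qed
  have smooth_y': "smooth y' = smooth y + inner (grad y) d + inner h d / 2"
    using smooth_expansion[of y d] grad_diff[of y' y]
    by (simp add: d_def h_def inner_add_left power2_norm_eq_inner)
  have "(norm (z - y'))\<^sup>2 = (norm a)\<^sup>2 - 2 * inner a d + (norm d)\<^sup>2"
    by (simp add: a_def d_def power2_norm_eq_inner inner_diff_left inner_diff_right inner_commute)
  then have dist_z_y': "(norm (z - y'))\<^sup>2 / (2 * \<gamma>) = (norm a)\<^sup>2 / (2 * \<gamma>) - inner h d / 2"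
    using \<gamma>_pos unfolding ad by (simp add: field_simps)
  have grad_y': "inner (grad y') (z - y') = inner (grad y) a - inner (grad y) d + inner h a - inner h d"
    by (simp add: a_def d_def h_def inner_diff_left inner_diff_right)
  have "merit y z = smooth y + inner (grad y) a + (norm a)\<^sup>2 / (2 * \<gamma>) - c / 2 * (norm z)\<^sup>2"
    by (simp add: merit_def a_def)
  then show ?thesis
    unfolding merit_def smooth_y' dist_z_y' grad_y' ha
    by (simp add: a_def d_def h_def field_simps)
qed

lemma gradient_step_bound:
  "\<gamma> / 2 * (norm (grad y' - grad y))\<^sup>2 - inner (grad y' - grad y) (y' - y) / 2
    \<le> - (c * (1 - c * \<gamma>) / 2 * (norm (y' - y))\<^sup>2)"
proof -
  define d where "d = y' - y"
  define s where "s = inner (S d) d"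
  have h: "grad y' - grad y = S d + c *\<^sub>R d" by (simp add: grad_diff d_def)
  have norm_h: "(norm (grad y' - grad y))\<^sup>2 = (norm (S d))\<^sup>2 + 2 * c * s + c\<^sup>2 * (norm d)\<^sup>2"
    unfolding h s_def power2_norm_eq_inner
    by (simp add: inner_add_left inner_add_right inner_commute algebra_simps power2_eq_square)
  have inner_h: "inner (grad y' - grad y) d = s + c * (norm d)\<^sup>2"
    unfolding h s_def by (simp add: inner_add_left power2_norm_eq_inner)
  define X where "X = \<gamma> * (norm (S d))\<^sup>2 - \<gamma> * (lam * s)"
  define Y where "Y = \<gamma> * (lam + 2 * c) * s - s"
  have "X \<le> 0"
    using S_bound[of d] \<gamma>_pos by (simp add: X_def s_def)
  moreover have "Y \<le> 0"
    using mult_right_mono[OF step_size S_psd[of d]] by (simp add: Y_def s_def)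
  moreover have eq: "\<gamma> / 2 * ((norm (S d))\<^sup>2 + 2 * c * s + c\<^sup>2 * (norm d)\<^sup>2) - (s + c * (norm d)\<^sup>2) / 2
      = - (c * (1 - c * \<gamma>) / 2 * (norm d)\<^sup>2) + (X + Y) / 2"
    by (simp add: X_def Y_def field_simps power2_eq_square)
  ultimately have "\<gamma> / 2 * ((norm (S d))\<^sup>2 + 2 * c * s + c\<^sup>2 * (norm d)\<^sup>2) - (s + c * (norm d)\<^sup>2) / 2
      \<le> - (c * (1 - c * \<gamma>) / 2 * (norm d)\<^sup>2)"
    unfolding eq by simp
  then show ?thesis by (simp only: norm_h inner_h d_def[symmetric])
qed

lemma merit_lower_bound: "- norm p * norm z \<le> merit y z"
proof -
  define d where "d = z - y"
  have merit_eq: "merit y z = smooth z - (inner (S d) d + c * (norm d)\<^sup>2) / 2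
      + (norm d)\<^sup>2 / (2 * \<gamma>) - c / 2 * (norm z)\<^sup>2"
    using smooth_expansion[of y d] by (simp add: merit_def d_def)
  have "\<gamma> * (lam + c) \<le> 1" using step_size c_pos \<gamma>_pos by (smt (verit) mult_left_mono)
  from mult_right_mono[OF this zero_le_power2[of "norm d"]]
  have "(lam + c) * (norm d)\<^sup>2 \<le> (norm d)\<^sup>2 / \<gamma>"
    using \<gamma>_pos by (simp add: le_divide_eq mult.commute mult.left_commute)
  then have "inner (S d) d + c * (norm d)\<^sup>2 \<le> (norm d)\<^sup>2 / \<gamma>"
    using inner_S_le[of d] by (simp add: algebra_simps)
  moreover have "- norm p * norm z \<le> smooth z - c / 2 * (norm z)\<^sup>2"
    using S_psd[of z] norm_cauchy_schwarz[of p z] by (simp add: smooth_def)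
  ultimately show ?thesis
    unfolding merit_eq by (simp add: field_simps)
qed

lemma inner_shift_ge: "(1 + \<gamma> * c) * (norm u)\<^sup>2 \<le> inner (u + \<gamma> *\<^sub>R (S u + c *\<^sub>R u)) u"
  using S_psd[of u] \<gamma>_pos
  by (simp add: inner_add_left power2_norm_eq_inner algebra_simps)

lemma norm_le_norm_shift: "norm u \<le> norm (u + \<gamma> *\<^sub>R (S u + c *\<^sub>R u))"
proof -
  have "(norm u)\<^sup>2 \<le> (1 + \<gamma> * c) * (norm u)\<^sup>2"
    using c_pos \<gamma>_pos by (simp add: distrib_right)
  also have "\<dots> \<le> norm (u + \<gamma> *\<^sub>R (S u + c *\<^sub>R u)) * norm u"
    using inner_shift_ge norm_cauchy_schwarz order_trans by blast
  finally show ?thesis by (cases "u = 0") (simp_all add: power2_eq_square mult_le_cancel_right)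
qed

lemma norm_shift_le: "norm (u + \<gamma> *\<^sub>R (S u + c *\<^sub>R u)) \<le> (1 + \<gamma> * (lam + c)) * norm u"
proof -
  have "norm (u + \<gamma> *\<^sub>R (S u + c *\<^sub>R u)) \<le> norm u + \<gamma> * (norm (S u) + c * norm u)"
    using norm_triangle_ineq[of u "\<gamma> *\<^sub>R (S u + c *\<^sub>R u)"]
      norm_triangle_ineq[of "S u" "c *\<^sub>R u"] \<gamma>_pos c_pos
    by (smt (verit) mult_left_mono norm_scaleR abs_of_pos)
  also have "\<dots> \<le> norm u + \<gamma> * (lam * norm u + c * norm u)"
    using norm_S_le[of u] \<gamma>_pos by simp
  finally show ?thesis by (simp add: algebra_simps)
qed

definition contraction_factor :: real where
  "contraction_factor = sqrt (1 - 4 * (\<gamma> * c) / (1 + \<gamma> * (lam + c))\<^sup>2)"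

lemma contraction_factor_nonneg: "0 \<le> contraction_factor"
  and contraction_factor_lt_1: "contraction_factor < 1"
proof -
  have gc: "0 < \<gamma> * c" using \<gamma>_pos c_pos by simp
  have "4 * (\<gamma> * c) \<le> (1 + \<gamma> * c)\<^sup>2"
    using zero_le_power2[of "1 - \<gamma> * c"] by (simp add: power2_eq_square algebra_simps)
  also have "\<dots> \<le> (1 + \<gamma> * (lam + c))\<^sup>2"
    using gc \<gamma>_pos lam_nonneg by (intro power_mono) (simp_all add: algebra_simps)
  finally show "0 \<le> contraction_factor"
    using gc by (simp add: contraction_factor_def divide_le_eq)
  have "0 < 1 + \<gamma> * (lam + c)"
    using mult_nonneg_nonneg[of \<gamma> "lam + c"] \<gamma>_pos lam_nonneg c_pos by linarith
  with gc show "contraction_factor < 1" by (simp add: contraction_factor_def)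
qed

lemma norm_reflected_shift_le:
  fixes u :: 'a
  defines "v \<equiv> u + \<gamma> *\<^sub>R (S u + c *\<^sub>R u)"
  shows "norm (v - 2 *\<^sub>R u) \<le> contraction_factor * norm v"
proof (rule power2_le_imp_le)
  have "(norm (v - 2 *\<^sub>R u))\<^sup>2 \<le> (1 - 4 * (\<gamma> * c) / (1 + \<gamma> * (lam + c))\<^sup>2) * (norm v)\<^sup>2"
    unfolding v_def
    using inner_shift_ge norm_shift_le \<gamma>_pos c_pos lam_nonneg
    by (intro norm_diff_double_le) (simp_all add: add_pos_nonneg)
  also have "\<dots> = (contraction_factor * norm v)\<^sup>2"
    using contraction_factor_nonneg
    by (simp add: contraction_factor_def power_mult_distrib)
  finally show "(norm (v - 2 *\<^sub>R u))\<^sup>2 \<le> (contraction_factor * norm v)\<^sup>2" .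
qed (use contraction_factor_nonneg in simp)

lemma proj_normal_vector_eq:
  "((1 - c * \<gamma>) / \<gamma>) *\<^sub>R ((1 / (1 - c * \<gamma>)) *\<^sub>R (y - \<gamma> *\<^sub>R grad y) - z)
    = (1 / \<gamma> - c) *\<^sub>R (y - z) - (S y - p)"
proof -
  have s1: "(1 - c * \<gamma>) / \<gamma> * (1 / (1 - c * \<gamma>)) = 1 / \<gamma>"
    using step_size_lt_1 by simp
  have s2: "(1 - c * \<gamma>) / \<gamma> = 1 / \<gamma> - c" using \<gamma>_pos by (simp add: field_simps)
  define w where "w = y - \<gamma> *\<^sub>R grad y"
  have "((1 - c * \<gamma>) / \<gamma>) *\<^sub>R ((1 / (1 - c * \<gamma>)) *\<^sub>R w - z)
      = ((1 - c * \<gamma>) / \<gamma> * (1 / (1 - c * \<gamma>))) *\<^sub>R w - ((1 - c * \<gamma>) / \<gamma>) *\<^sub>R z"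
    by (simp only: scaleR_diff_right scaleR_scaleR)
  also have "\<dots> = (1 / \<gamma>) *\<^sub>R w - (1 / \<gamma> - c) *\<^sub>R z"
    unfolding s1 unfolding s2 ..
  also have "(1 / \<gamma>) *\<^sub>R w = (1 / \<gamma> - c) *\<^sub>R y - (S y - p)"
    using \<gamma>_pos by (simp add: w_def grad_def scaleR_diff_right scaleR_add_right scaleR_diff_left)
  finally show ?thesis by (simp add: w_def scaleR_diff_right)
qed

end

locale dr_iteration = dr_quadratic +
  fixes D :: "'a set" and x y z :: "nat \<Rightarrow> 'a"
  assumes D_compact: "compact D"
    and y_step: "\<And>t. x t = y (Suc t) + \<gamma> *\<^sub>R (S (y (Suc t)) + c *\<^sub>R y (Suc t) - p)"
    and z_step: "\<And>t. z (Suc t) \<in> proj_set D ((1 / (1 - c * \<gamma>)) *\<^sub>R (2 *\<^sub>R y (Suc t) - x t))"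
    and x_step: "\<And>t. x (Suc t) = x t + 2 *\<^sub>R (z (Suc t) - y (Suc t))"
begin

lemma x_eq_grad: "x t = y (Suc t) + \<gamma> *\<^sub>R grad (y (Suc t))"
  using y_step by (simp add: grad_def)

lemma z_in_D: "z (Suc t) \<in> D"
  using z_step[of t] by (simp add: proj_set_def)

lemma z_proj_grad: "z (Suc t) \<in> proj_set D ((1 / (1 - c * \<gamma>)) *\<^sub>R (y (Suc t) - \<gamma> *\<^sub>R grad (y (Suc t))))"
proof -
  have "2 *\<^sub>R y (Suc t) - x t = y (Suc t) - \<gamma> *\<^sub>R grad (y (Suc t))"
    by (simp add: x_eq_grad scaleR_2)
  then show ?thesis using z_step[of t] by simp
qed

lemma z_minus_y_eq:
  "2 *\<^sub>R (z (Suc t) - y (Suc t))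
    = (y (Suc (Suc t)) - y (Suc t)) + \<gamma> *\<^sub>R (grad (y (Suc (Suc t))) - grad (y (Suc t)))"
proof -
  have step: "y (Suc (Suc t)) + \<gamma> *\<^sub>R grad (y (Suc (Suc t)))
      = y (Suc t) + \<gamma> *\<^sub>R grad (y (Suc t)) + 2 *\<^sub>R (z (Suc t) - y (Suc t))"
    using x_step[of t] by (simp only: x_eq_grad)
  have "2 *\<^sub>R (z (Suc t) - y (Suc t))
      = (y (Suc (Suc t)) + \<gamma> *\<^sub>R grad (y (Suc (Suc t)))) - (y (Suc t) + \<gamma> *\<^sub>R grad (y (Suc t)))"
    unfolding step by simp
  then show ?thesis by (simp add: algebra_simps)
qed

lemma merit_descent:
  "merit (y (Suc (Suc t))) (z (Suc (Suc t)))
    \<le> merit (y (Suc t)) (z (Suc t)) - c * (1 - c * \<gamma>) / 2 * (norm (y (Suc (Suc t)) - y (Suc t)))\<^sup>2"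
proof -
  have "merit (y (Suc (Suc t))) (z (Suc (Suc t))) \<le> merit (y (Suc (Suc t))) (z (Suc t))"
    by (rule merit_proj_step[OF z_proj_grad z_in_D])
  also have "\<dots> = merit (y (Suc t)) (z (Suc t))
      + \<gamma> / 2 * (norm (grad (y (Suc (Suc t))) - grad (y (Suc t))))\<^sup>2
      - inner (grad (y (Suc (Suc t))) - grad (y (Suc t))) (y (Suc (Suc t)) - y (Suc t)) / 2"
    by (rule merit_gradient_step_eq[OF z_minus_y_eq])
  finally show ?thesis
    using gradient_step_bound[of "y (Suc (Suc t))" "y (Suc t)"] by linarith
qed

lemma y_diff_tendsto_zero: "(\<lambda>t. y (Suc (Suc t)) - y (Suc t)) \<longlonglongrightarrow> 0"
proof -
  obtain R where R: "\<And>u. u \<in> D \<Longrightarrow> norm u \<le> R"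
    using compact_imp_bounded[OF D_compact] unfolding bounded_iff by blast
  have "(\<lambda>t. (norm (y (Suc (Suc t)) - y (Suc t)))\<^sup>2) \<longlonglongrightarrow> 0"
  proof (rule descent_tendsto_zero)
    show "merit (y (Suc (Suc t))) (z (Suc (Suc t)))
        \<le> merit (y (Suc t)) (z (Suc t)) - c * (1 - c * \<gamma>) / 2 * (norm (y (Suc (Suc t)) - y (Suc t)))\<^sup>2"
      for t by (rule merit_descent)
    show "- norm p * R \<le> merit (y (Suc t)) (z (Suc t))" for t
      using merit_lower_bound[of "z (Suc t)" "y (Suc t)"]
        mult_left_mono[OF R[OF z_in_D[of t]] norm_ge_zero[of p]]
      by linarith
    show "0 < c * (1 - c * \<gamma>) / 2" using c_pos step_size_lt_1 by simp
  qed simp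
  from tendsto_real_sqrt[OF this]
  have "(\<lambda>t. norm (y (Suc (Suc t)) - y (Suc t))) \<longlonglongrightarrow> 0" by simp
  then show ?thesis by (simp add: tendsto_norm_zero_iff)
qed

lemma z_minus_y_tendsto_zero: "(\<lambda>t. z (Suc t) - y (Suc t)) \<longlonglongrightarrow> 0"
proof (rule Lim_null_comparison)
  show "\<forall>\<^sub>F t in sequentially. norm (z (Suc t) - y (Suc t))
      \<le> (1 + \<gamma> * (lam + c)) / 2 * norm (y (Suc (Suc t)) - y (Suc t))"
  proof (intro always_eventually allI)
    fix t
    define d where "d = y (Suc (Suc t)) - y (Suc t)"
    have "2 * norm (z (Suc t) - y (Suc t)) = norm (d + \<gamma> *\<^sub>R (grad (y (Suc (Suc t))) - grad (y (Suc t))))"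
      using arg_cong[OF z_minus_y_eq[of t], of norm] by (simp add: d_def)
    also have "\<dots> \<le> norm d + \<gamma> * ((lam + c) * norm d)"
      using norm_triangle_ineq norm_grad_diff_le[of "y (Suc (Suc t))" "y (Suc t)"] \<gamma>_pos
      by (smt (verit) d_def mult_left_mono norm_scaleR abs_of_pos)
    finally show "norm (z (Suc t) - y (Suc t)) \<le> (1 + \<gamma> * (lam + c)) / 2 * norm d"
      by (simp add: algebra_simps)
  qed
  show "(\<lambda>t. (1 + \<gamma> * (lam + c)) / 2 * norm (y (Suc (Suc t)) - y (Suc t))) \<longlonglongrightarrow> 0"
    using tendsto_mult_right_zero[OF tendsto_norm_zero[OF y_diff_tendsto_zero]] by simp
qed

lemma shift_y_eq: "y (Suc t) + \<gamma> *\<^sub>R (S (y (Suc t)) + c *\<^sub>R y (Suc t)) = x t + \<gamma> *\<^sub>R p"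
  by (simp add: y_step scaleR_diff_right)

lemma norm_y_le: "norm (y (Suc t)) \<le> norm (x t) + \<gamma> * norm p"
  using norm_le_norm_shift[of "y (Suc t)"] norm_triangle_ineq[of "x t" "\<gamma> *\<^sub>R p"] \<gamma>_pos
  unfolding shift_y_eq by simp

lemma norm_x_recurrence:
  assumes R: "\<And>u. u \<in> D \<Longrightarrow> norm u \<le> R"
  shows "norm (x (Suc t)) \<le> contraction_factor * norm (x t) + (2 * \<gamma> * norm p + 2 * R)"
proof -
  define u where "u = y (Suc t)"
  define v where "v = x t + \<gamma> *\<^sub>R p"
  have x_next: "x (Suc t) = (v - 2 *\<^sub>R u) - \<gamma> *\<^sub>R p + 2 *\<^sub>R z (Suc t)"
    by (simp add: x_step u_def v_def algebra_simps)
  have "norm (x (Suc t)) \<le> norm (v - 2 *\<^sub>R u) + \<gamma> * norm p + 2 * R"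
    using norm_triangle_ineq[of "(v - 2 *\<^sub>R u) - \<gamma> *\<^sub>R p" "2 *\<^sub>R z (Suc t)"]
      norm_triangle_ineq4[of "v - 2 *\<^sub>R u" "\<gamma> *\<^sub>R p"] R[OF z_in_D[of t]] \<gamma>_pos
    unfolding x_next by simp
  moreover have "norm (v - 2 *\<^sub>R u) \<le> contraction_factor * norm v"
    using norm_reflected_shift_le[of u] unfolding u_def v_def shift_y_eq .
  moreover have "contraction_factor * norm v \<le> contraction_factor * norm (x t) + \<gamma> * norm p"
  proof -
    have "contraction_factor * norm v \<le> contraction_factor * (norm (x t) + \<gamma> * norm p)"
      using norm_triangle_ineq[of "x t" "\<gamma> *\<^sub>R p"] \<gamma>_pos contraction_factor_nonneg
      by (simp add: v_def mult_left_mono)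
    moreover have "contraction_factor * (\<gamma> * norm p) \<le> \<gamma> * norm p"
      using mult_left_le_one_le[of "\<gamma> * norm p" contraction_factor]
        contraction_factor_nonneg contraction_factor_lt_1 \<gamma>_pos
      by simp
    ultimately show ?thesis by (simp add: distrib_left)
  qed
  ultimately show ?thesis by linarith
qed

lemma bounded_iterates: "bounded (range (\<lambda>t. (y (Suc t), z (Suc t), x (Suc t))))"
proof -
  obtain R where R: "\<And>u. u \<in> D \<Longrightarrow> norm u \<le> R"
    using compact_imp_bounded[OF D_compact] unfolding bounded_iff by blast
  define B where "B = max (norm (x 0)) ((2 * \<gamma> * norm p + 2 * R) / (1 - contraction_factor))"
  have x_le: "norm (x t) \<le> B" for t
    unfolding B_def using contraction_factor_nonneg contraction_factor_lt_1 norm_x_recurrence[OF R]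
    by (rule affine_recurrence_bounded)
  have "range (\<lambda>t. (y (Suc t), z (Suc t), x (Suc t))) \<subseteq> cball 0 (B + \<gamma> * norm p) \<times> cball 0 R \<times> cball 0 B"
    using x_le norm_y_le R z_in_D by (force intro: order_trans)
  then show ?thesis by (rule bounded_subset[rotated]) (intro bounded_Times bounded_cball)
qed

lemma cluster_point_stationary:
  assumes "strict_mono r" and y_lim: "(\<lambda>k. y (Suc (r k))) \<longlonglongrightarrow> yb"
    and z_lim: "(\<lambda>k. z (Suc (r k))) \<longlonglongrightarrow> zb"
  shows "yb = zb \<and> - (S zb - p) \<in> limiting_subdiff (indicator_fun D) zb"
proof
  have "(\<lambda>k. z (Suc (r k)) - y (Suc (r k))) \<longlonglongrightarrow> 0"
    using LIMSEQ_subseq_LIMSEQ[OF z_minus_y_tendsto_zero \<open>strict_mono r\<close>] by (simp add: o_def)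
  moreover have "(\<lambda>k. z (Suc (r k)) - y (Suc (r k))) \<longlonglongrightarrow> zb - yb"
    by (intro tendsto_diff z_lim y_lim)
  ultimately show "yb = zb" using LIMSEQ_unique by fastforce
  have "zb \<in> D"
    using closed_sequentially[OF compact_imp_closed[OF D_compact] _ z_lim] z_in_D by blast
  define n where "n t = (1 / \<gamma> - c) *\<^sub>R (y t - z t) - (S (y t) - p)" for t
  have "n (Suc t) \<in> regular_subdiff (indicator_fun D) (z (Suc t))" for t
    using proj_set_normal_regular_subdiff[OF z_proj_grad, of "(1 - c * \<gamma>) / \<gamma>" t]
      step_size_lt_1 \<gamma>_pos
    unfolding proj_normal_vector_eq n_def by simp
  moreover have "(\<lambda>k. n (Suc (r k))) \<longlonglongrightarrow> (1 / \<gamma> - c) *\<^sub>R (yb - zb) - (S yb - p)"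
    unfolding n_def by (intro tendsto_intros S.tendsto y_lim z_lim)
  ultimately show "- (S zb - p) \<in> limiting_subdiff (indicator_fun D) zb"
    unfolding limiting_subdiff_def
    using z_lim z_in_D \<open>zb \<in> D\<close> \<open>yb = zb\<close>
    by (intro CollectI exI[of _ "\<lambda>k. z (Suc (r k))"] exI[of _ "\<lambda>k. n (Suc (r k))"])
      (simp add: indicator_fun_def)
qed

end

section \<open>The least-squares instance\<close>

lemma gram_dr_quadratic:
  fixes A :: "real^'n^'m"
  assumes "0 \<le> lambda_max (transpose A ** A)" and "0 < c" and "0 < \<gamma>"
    and "\<gamma> * (lambda_max (transpose A ** A) + 2 * c) \<le> 1"
  shows "dr_quadratic (\<lambda>u. transpose A *v (A *v u)) (lambda_max (transpose A ** A)) c \<gamma>"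
proof (rule dr_quadratic.intro)
  show "bounded_linear (\<lambda>u. transpose A *v (A *v u))"
    by (rule bounded_linear_compose[OF matrix_vector_mul_bounded_linear
          matrix_vector_mul_bounded_linear])
  show "inner (transpose A *v (A *v u)) v = inner u (transpose A *v (A *v v))" for u v
    using inner_transpose_mult[of A "A *v u" v] inner_transpose_mult[of A "A *v v" u]
    by (simp only: inner_commute)
  show "(norm (transpose A *v (A *v v)))\<^sup>2
      \<le> lambda_max (transpose A ** A) * inner (transpose A *v (A *v v)) v" for v
    using norm_gram_sq_le[OF assms(1)] by (simp add: dot_lmul_matrix power2_norm_eq_inner)
qed (use assms in auto)

lemma matrix_inv_mult_right:
  fixes M :: "'a::field^'n^'n"
  assumes "\<And>u. M *v u = 0 \<Longrightarrow> u = 0"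
  shows "M *v (matrix_inv M *v w) = w"
proof -
  have "invertible M"
    using assms matrix_left_invertible_ker invertible_left_inverse by blast
  then have "M ** matrix_inv M = mat 1"
    unfolding invertible_def matrix_inv_def by (rule someI_ex[THEN conjunct1])
  then show ?thesis by (simp add: matrix_vector_mul_assoc)
qed

lemma gram_resolvent_step:
  fixes A :: "real^'n^'m"
  assumes "0 < \<gamma>" and "0 \<le> c" and a: "a = 1 + \<gamma> * c"
    and y: "y = matrix_inv (a *\<^sub>R mat 1 + \<gamma> *\<^sub>R (transpose A ** A)) *v (x + \<gamma> *\<^sub>R (transpose A *v b))"
  shows "x = y + \<gamma> *\<^sub>R (transpose A *v (A *v y) + c *\<^sub>R y - transpose A *v b)"
proof -
  define M where "M = a *\<^sub>R mat 1 + \<gamma> *\<^sub>R (transpose A ** A)"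
  have M: "M *v u = u + \<gamma> *\<^sub>R (transpose A *v (A *v u) + c *\<^sub>R u)" for u
    by (simp add: M_def a matrix_vector_mult_add_rdistrib matrix_vector_mul_assoc[symmetric]
        scaleR_matrix_vector_assoc[symmetric] algebra_simps)
  have "u = 0" if "M *v u = 0" for u
  proof -
    have "0 = inner (M *v u) u" using that by simp
    also have "\<dots> = (1 + \<gamma> * c) * (norm u)\<^sup>2 + \<gamma> * (norm (A *v u))\<^sup>2"
      unfolding M by (simp add: inner_add_left dot_lmul_matrix power2_norm_eq_inner algebra_simps)
    finally show "u = 0"
      using \<open>0 < \<gamma>\<close> \<open>0 \<le> c\<close> by (smt (verit) mult_nonneg_nonneg mult_pos_pos zero_le_power2
          zero_less_power2 norm_eq_zero)
  qed
  then have "M *v y = x + \<gamma> *\<^sub>R (transpose A *v b)"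
    unfolding y M_def[symmetric] by (rule matrix_inv_mult_right)
  then show ?thesis unfolding M by (simp add: algebra_simps)
qed

theorem mainTheorem12:
  fixes A :: "real^'n^'m" and b :: "real^'m" and D :: "(real^'n) set"
    and x y z :: "nat \<Rightarrow> real^'n" and \<gamma> :: real
  assumes lam_pos: "lambda_max (transpose A ** A) > 0"
    and D_ne: "D \<noteq> {}" and D_compact: "compact D"
    and gam_pos: "0 < \<gamma>" and gam_lt: "\<gamma> < 1 / (12 * lambda_max (transpose A ** A))"
    and y_upd: "\<And>t. y (Suc t) = matrix_inv ((5 * \<gamma> * lambda_max (transpose A ** A) + 1) *\<^sub>R mat 1
                      + \<gamma> *\<^sub>R (transpose A ** A)) *v (x t + \<gamma> *\<^sub>R (transpose A *v b))"
    and z_upd: "\<And>t. z (Suc t) \<in> proj_set D ((1 / (1 - 5 * lambda_max (transpose A ** A) * \<gamma>))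
                      *\<^sub>R (2 *\<^sub>R y (Suc t) - x t))"
    and x_upd: "\<And>t. x (Suc t) = x t + 2 *\<^sub>R (z (Suc t) - y (Suc t))"
  shows "bounded (range (\<lambda>t. (y (Suc t), z (Suc t), x (Suc t))))
    \<and> (\<forall>yb zb xb. (\<exists>r. strict_mono r \<and> (\<lambda>k. (y (Suc (r k)), z (Suc (r k)), x (Suc (r k))))
                         \<longlonglongrightarrow> (yb, zb, xb))
        \<longrightarrow> yb = zb \<and> - (transpose A *v (A *v zb - b)) \<in> limiting_subdiff (indicator_fun D) zb)"
proof -
  define lam where "lam = lambda_max (transpose A ** A)"
  have "\<gamma> * (12 * lam) < 1"
    using gam_lt lam_pos by (simp add: lam_def less_divide_eq mult.commute)
  then have step_size: "\<gamma> * (lam + 2 * (5 * lam)) \<le> 1" by simp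
  interpret dr_iteration "\<lambda>u. transpose A *v (A *v u)" "transpose A *v b" lam "5 * lam" \<gamma> D x y z
  proof (intro dr_iteration.intro dr_iteration_axioms.intro)
    show "dr_quadratic (\<lambda>u. transpose A *v (A *v u)) lam (5 * lam) \<gamma>"
      unfolding lam_def using lam_pos gam_pos step_size
      by (intro gram_dr_quadratic) (simp_all add: lam_def)
    show "x t = y (Suc t) + \<gamma> *\<^sub>R (transpose A *v (A *v y (Suc t)) + (5 * lam) *\<^sub>R y (Suc t)
        - transpose A *v b)" for t
      using lam_pos gam_pos by (intro gram_resolvent_step[OF _ _ _ y_upd]) (simp_all add: lam_def)
  qed (use D_compact z_upd x_upd in \<open>simp_all add: lam_def\<close>)
  show ?thesis
  proof (rule conjI[OF bounded_iterates], intro allI impI)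
    fix yb zb xb
    assume "\<exists>r. strict_mono r \<and> (\<lambda>k. (y (Suc (r k)), z (Suc (r k)), x (Suc (r k)))) \<longlonglongrightarrow> (yb, zb, xb)"
    then obtain r where r: "strict_mono r"
      and lim: "(\<lambda>k. (y (Suc (r k)), z (Suc (r k)), x (Suc (r k)))) \<longlonglongrightarrow> (yb, zb, xb)" by blast
    have "(\<lambda>k. y (Suc (r k))) \<longlonglongrightarrow> yb" "(\<lambda>k. z (Suc (r k))) \<longlonglongrightarrow> zb"
      using tendsto_fst[OF lim] tendsto_fst[OF tendsto_snd[OF lim]] by simp_all
    from cluster_point_stationary[OF r this]
    show "yb = zb \<and> - (transpose A *v (A *v zb - b)) \<in> limiting_subdiff (indicator_fun D) zb"
      by (simp add: matrix_vector_mult_diff_distrib)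
  qed
qed

end
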